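(* Let $\rho_b,\rho_f\in(0,1)$ and $\mu=\frac{(1-\rho_b)(1-\rho_f)}{1-\rho_b\rho_f}$. Let $(x_i)_{i\in\mathbb Z}$ be real numbers with $|x_i|<M$ for all $i$, for some constant $M<\infty$. Define $y_i(k)$ for all $i\in\mathbb Z$, $k\ge0$ by $y_i(0)=\mu x_i$; $y_i(1)=y_i(0)+\rho_b y_{i-1}(0)+\rho_f y_{i+1}(0)$; $y_i(2)=y_i(1)+\rho_b(y_{i-1}(1)-y_{i-1}(0))+\rho_f(y_{i+1}(1)-y_{i+1}(0))-2\rho_b\rho_f y_i(0)$; and for $k\ge2$, $y_i(k+1)=y_i(k)+\rho_b(y_{i-1}(k)-y_{i-1}(k-1))+\rho_f(y_{i+1}(k)-y_{i+1}(k-1))-\rho_b\rho_f(y_i(k-1)-y_i(k-2))$. Then for every $i$, $$\lim_{k\to\infty}y_i(k)=\frac{(1-\rho_b)(1-\rho_f)}{1-\rho_b\rho_f}\Big(x_i+\sum_{j=1}^\infty(\rho_b^j x_{i-j}+\rho_f^j x_{i+j})\Big).$$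
   Context: Sensors indexed by $i\in\mathbb Z$ on a line, each with a time-invariant measurement $x_i$ and consensus variable $y_i(k)$, $k=0,1,2,\dots$; communication only with immediate neighbors $i\pm1$. *)

theory Defs
  imports "HOL-Analysis.Analysis"
begin

definition cons_mu :: "real \<Rightarrow> real \<Rightarrow> real" where
  "cons_mu rb rf = (1 - rb) * (1 - rf) / (1 - rb * rf)"

fun cons_y :: "real \<Rightarrow> real \<Rightarrow> (int \<Rightarrow> real) \<Rightarrow> nat \<Rightarrow> int \<Rightarrow> real" where
  "cons_y rb rf x 0 i = cons_mu rb rf * x i"
| "cons_y rb rf x (Suc 0) i =
     cons_y rb rf x 0 i + rb * cons_y rb rf x 0 (i - 1) + rf * cons_y rb rf x 0 (i + 1)"
| "cons_y rb rf x (Suc (Suc 0)) i =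
     cons_y rb rf x 1 i
     + rb * (cons_y rb rf x 1 (i - 1) - cons_y rb rf x 0 (i - 1))
     + rf * (cons_y rb rf x 1 (i + 1) - cons_y rb rf x 0 (i + 1))
     - 2 * rb * rf * cons_y rb rf x 0 i"
| "cons_y rb rf x (Suc (Suc (Suc k))) i =
     cons_y rb rf x (Suc (Suc k)) i
     + rb * (cons_y rb rf x (Suc (Suc k)) (i - 1) - cons_y rb rf x (Suc k) (i - 1))
     + rf * (cons_y rb rf x (Suc (Suc k)) (i + 1) - cons_y rb rf x (Suc k) (i + 1))
     - rb * rf * (cons_y rb rf x (Suc k) i - cons_y rb rf x k i)"

end

theory Submission
  imports Defs
begin

(* The consensus iteration has an explicit closed form: after k steps, sensor i holds
     y_i(k) = mu * (x_i + sum_{j<k} (rb^(j+1) x_{i-j-1} + rf^(j+1) x_{i+j+1})),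
   i.e. step k adds exactly the contributions of the two sensors at distance k+1,
   weighted geometrically.  The limit theorem then reduces to summability of these
   contributions, which holds because the measurements are bounded and rb, rf < 1. *)

definition cons_term :: "real \<Rightarrow> real \<Rightarrow> (int \<Rightarrow> real) \<Rightarrow> int \<Rightarrow> nat \<Rightarrow> real" where
  "cons_term rb rf x i j = rb ^ Suc j * x (i - int (Suc j)) + rf ^ Suc j * x (i + int (Suc j))"

text \<open>The shift identity behind the recurrence: the neighbours' contributions at distance
  k+2, corrected by the doubly counted distance-(k+1) terms, give the distance-(k+3)
  contribution of sensor i.\<close>
lemma cons_term_shift:
  "rb * cons_term rb rf x (i - 1) (Suc k) + rf * cons_term rb rf x (i + 1) (Suc k)
     - rb * rf * cons_term rb rf x i k = cons_term rb rf x i (Suc (Suc k))"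
proof -
  have "i - 1 - int (Suc (Suc k)) = i - int (Suc (Suc (Suc k)))"
    and "i + 1 + int (Suc (Suc k)) = i + int (Suc (Suc (Suc k)))"
    and "i - 1 + int (Suc (Suc k)) = i + int (Suc k)"
    and "i + 1 - int (Suc (Suc k)) = i - int (Suc k)"
    by simp_all
  then show ?thesis
    unfolding cons_term_def by (simp add: algebra_simps)
qed

lemma cons_y_closed_form:
  "cons_y rb rf x k i = cons_mu rb rf * (x i + (\<Sum>j<k. cons_term rb rf x i j))"
proof (induction rb rf x k i rule: cons_y.induct)
  case (1 rb rf x i)
  then show ?case by simp
next
  case (2 rb rf x i)
  then show ?case by (simp add: cons_term_def algebra_simps)
next
  case (3 rb rf x i)
  then show ?case by (simp add: cons_term_def algebra_simps numeral_2_eq_2)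
next
  case (4 rb rf x k i)
  let ?y = "cons_y rb rf x" and ?t = "cons_term rb rf x" and ?mu = "cons_mu rb rf"
  have incr_left: "?y (Suc (Suc k)) (i - 1) - ?y (Suc k) (i - 1) = ?mu * ?t (i - 1) (Suc k)"
    and incr_right: "?y (Suc (Suc k)) (i + 1) - ?y (Suc k) (i + 1) = ?mu * ?t (i + 1) (Suc k)"
    and incr_centre: "?y (Suc k) i - ?y k i = ?mu * ?t i k"
    using "4.IH" by (simp_all add: algebra_simps)
  have "?y (Suc (Suc (Suc k))) i = ?y (Suc (Suc k)) i
     + ?mu * (rb * ?t (i - 1) (Suc k) + rf * ?t (i + 1) (Suc k) - rb * rf * ?t i k)"
    by (simp only: cons_y.simps incr_left incr_right incr_centre) (simp add: algebra_simps)
  also have "\<dots> = ?mu * (x i + (\<Sum>j<Suc (Suc (Suc k)). ?t i j))"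
    unfolding cons_term_shift "4.IH" by (simp add: algebra_simps)
  finally show ?case .
qed

lemma summable_cons_term:
  fixes rb rf M :: real
  assumes "\<bar>rb\<bar> < 1" "\<bar>rf\<bar> < 1" and bounded: "\<And>i. \<bar>x i\<bar> \<le> M"
  shows "summable (cons_term rb rf x i)"
proof (rule summable_comparison_test)
  show "summable (\<lambda>j. M * (\<bar>rb\<bar> ^ Suc j + \<bar>rf\<bar> ^ Suc j))"
    using assms(1,2) by (intro summable_mult summable_add summable_mult) (auto simp: summable_geometric)
  show "\<exists>N. \<forall>j\<ge>N. norm (cons_term rb rf x i j) \<le> M * (\<bar>rb\<bar> ^ Suc j + \<bar>rf\<bar> ^ Suc j)"
  proof (intro exI allI impI)
    fix j
    have "\<bar>rb ^ Suc j * x (i - int (Suc j))\<bar> \<le> \<bar>rb\<bar> ^ Suc j * M"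
      unfolding abs_mult power_abs by (intro mult_left_mono bounded) simp
    moreover have "\<bar>rf ^ Suc j * x (i + int (Suc j))\<bar> \<le> \<bar>rf\<bar> ^ Suc j * M"
      unfolding abs_mult power_abs by (intro mult_left_mono bounded) simp
    ultimately show "norm (cons_term rb rf x i j) \<le> M * (\<bar>rb\<bar> ^ Suc j + \<bar>rf\<bar> ^ Suc j)"
      unfolding cons_term_def real_norm_def
      using abs_triangle_ineq[of "rb ^ Suc j * x (i - int (Suc j))" "rf ^ Suc j * x (i + int (Suc j))"]
      by (simp add: algebra_simps)
  qed
qed

theorem mainTheorem2:
  fixes rb rf M :: real and x :: "int \<Rightarrow> real"
  assumes "0 < rb" "rb < 1" "0 < rf" "rf < 1"
    and "\<And>i. \<bar>x i\<bar> < M"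
  shows "\<forall>i::int. (\<lambda>k. cons_y rb rf x k i) \<longlonglongrightarrow>
           (1 - rb) * (1 - rf) / (1 - rb * rf) *
           (x i + (\<Sum>j. rb ^ Suc j * x (i - int (Suc j)) + rf ^ Suc j * x (i + int (Suc j))))"
proof
  fix i :: int
  have "summable (cons_term rb rf x i)"
    using assms by (intro summable_cons_term[where M = M]) (auto intro: less_imp_le)
  then have "(\<lambda>k. cons_mu rb rf * (x i + (\<Sum>j<k. cons_term rb rf x i j))) \<longlonglongrightarrow>
             cons_mu rb rf * (x i + (\<Sum>j. cons_term rb rf x i j))"
    by (intro tendsto_intros summable_LIMSEQ)
  then show "(\<lambda>k. cons_y rb rf x k i) \<longlonglongrightarrow>
           (1 - rb) * (1 - rf) / (1 - rb * rf) *
           (x i + (\<Sum>j. rb ^ Suc j * x (i - int (Suc j)) + rf ^ Suc j * x (i + int (Suc j))))"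
    unfolding cons_y_closed_form by (simp add: cons_mu_def cons_term_def)
qed

end
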